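(* The $R_5$-submodules $U',U'',U''',U''''$ and $U$ of $H_5$ are stable under $\Phi$, i.e. $\Phi(X)\subseteq X$ for each of them.
   Context: Let $B_3=\langle s_1,s_2\mid s_1s_2s_1=s_2s_1s_2\rangle$, $R_5=\mathbb{Z}[a,b,c,d,e,e^{-1}]$, and let $H_5$ be the quotient of the group algebra $R_5B_3$ by the relations $s_i^5=as_i^4+bs_i^3+cs_i^2+ds_i+e$ for $i=1,2$; identify $s_i$ with their images. Let $\Phi$ be the ring (i.e. $\mathbb{Z}$-algebra) automorphism of $H_5$ determined by $s_i\mapsto s_i^{-1}$ ($i=1,2$), $a\mapsto -e^{-1}d$, $b\mapsto -e^{-1}c$, $c\mapsto -e^{-1}b$, $d\mapsto -e^{-1}a$, $e\mapsto e^{-1}$. For $i=1,2$ let $u_i$ be the $R_5$-subalgebra of $H_5$ generated by $s_i$. Set $\omega=s_2s_1^2s_2$. For $R_5$-submodules (or elements) $X_1,\dots,X_n$, $X_1\cdots X_n$ denotes the $R_5$-submodule spanned by products $x_1\cdots x_n$, $x_j\in X_j$; sums are sums of submodules. Define $U'=u_1u_2u_1+u_1\omega+u_1\omega^{-1}+u_1s_2^{-1}s_1^2s_2^{-1}u_1+u_1s_2s_1^{-2}s_2u_1+u_1s_2^2s_1^2s_2^2u_1+u_1s_2^{-2}s_1^{-2}s_2^{-2}u_1+u_1s_2s_1^{-2}s_2^2u_1+u_1s_2^{-1}s_1^2s_2^{-2}u_1+u_1s_2^{-1}s_1s_2^{-1}u_1+u_1s_2s_1^{-1}s_2u_1+u_1s_2^{-2}s_1^{-2}s_2^2u_1+u_1s_2^2s_1^2s_2^{-2}u_1+u_1s_2^2s_1^{-2}s_2^2u_1+u_1s_2^{-2}s_1^2s_2^{-2}u_1+u_1s_2^{-2}s_1s_2^{-1}u_1+u_1s_2^{-1}s_1s_2^{-2}u_1$;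 $U''=U'+u_1\omega^2+u_1\omega^{-2}+u_1s_2^{-2}s_1^2s_2^{-1}s_1s_2^{-1}u_1+u_1s_2^2s_1^{-2}s_2s_1^{-1}s_2u_1+u_1s_2s_1^{-2}s_2^2s_1^{-2}s_2^2u_1+u_1s_2^{-1}s_1^2s_2^{-2}s_1^2s_2^{-2}u_1$; $U'''=U''+u_1\omega^3+u_1\omega^{-3}$; $U''''=U'''+u_1\omega^4+u_1\omega^{-4}$; $U=U''''+u_1\omega^5+u_1\omega^{-5}$. *)

theory Defs
  imports Main "HOL-Library.Poly_Mapping" "HOL-Library.Product_Plus"
begin

section \<open>The coefficient ring R5 = Z[a,b,c,d,e,e^-1]\<close>

text \<open>Laurent-type polynomials: a monomial a^i b^j c^k d^l e^n is encoded by its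
  exponent vector (i,j,k,l,n) with i,j,k,l natural and n an integer.\<close>

type_synonym R5 = "(nat \<times> nat \<times> nat \<times> nat \<times> int) \<Rightarrow>\<^sub>0 int"

definition pa :: R5 where "pa = Poly_Mapping.single (1,0,0,0,0) 1"
definition pb :: R5 where "pb = Poly_Mapping.single (0,1,0,0,0) 1"
definition pc :: R5 where "pc = Poly_Mapping.single (0,0,1,0,0) 1"
definition pd :: R5 where "pd = Poly_Mapping.single (0,0,0,1,0) 1"
definition pe :: R5 where "pe = Poly_Mapping.single (0,0,0,0,1) 1"
definition pe_inv :: R5 where "pe_inv = Poly_Mapping.single (0,0,0,0,-1) 1"

definition phi_mono :: "nat \<times> nat \<times> nat \<times> nat \<times> int \<Rightarrow> R5" where
  "phi_mono m = (case m of (i,j,k,l,n) \<Rightarrow>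
      (- pe_inv * pd) ^ i * (- pe_inv * pc) ^ j * (- pe_inv * pb) ^ k * (- pe_inv * pa) ^ l
      * Poly_Mapping.single (0,0,0,0,-n) 1)"

definition phiR :: "R5 \<Rightarrow> R5" where
  "phiR p = (\<Sum>m\<in>Poly_Mapping.keys p. of_int (Poly_Mapping.lookup p m) * phi_mono m)"

datatype letter = S1 | S1i | S2 | S2i

datatype fw = FW "letter list"

instantiation fw :: monoid_add
begin
definition zero_fw :: fw where "zero_fw = FW []"
fun plus_fw :: "fw \<Rightarrow> fw \<Rightarrow> fw" where "plus_fw (FW x) (FW y) = FW (x @ y)"
instance
proof
  fix a b c :: fw
  show "a + b + c = a + (b + c)" by (cases a; cases b; cases c) simp
  show "0 + a = a" by (cases a) (simp add: zero_fw_def)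
  show "a + 0 = a" by (cases a) (simp add: zero_fw_def)
qed
end

text \<open>Free algebra: finitely supported R5-linear combinations of words,
  multiplication = concatenation of words.\<close>
type_synonym F = "fw \<Rightarrow>\<^sub>0 R5"

definition gen :: "letter \<Rightarrow> F" where "gen l = Poly_Mapping.single (FW [l]) 1"

definition s1 :: F where "s1 = gen S1"
definition s1i :: F where "s1i = gen S1i"
definition s2 :: F where "s2 = gen S2"
definition s2i :: F where "s2i = gen S2i"

definition scal :: "R5 \<Rightarrow> F" where "scal r = Poly_Mapping.single 0 r"

definition rspan :: "F set \<Rightarrow> F set" where
  "rspan S = {x. \<exists>T f. finite T \<and> T \<subseteq> S \<and> x = (\<Sum>t\<in>T. scal (f t) * t)}"

definition msum2 :: "F set \<Rightarrow> F set \<Rightarrow> F set" where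
  "msum2 A B = {x + y | x y. x \<in> A \<and> y \<in> B}"

definition msum :: "F set list \<Rightarrow> F set" where
  "msum Xs = foldr msum2 Xs {0}"

definition mprod :: "F set list \<Rightarrow> F set" where
  "mprod Xs = rspan {prod_list xs | xs. list_all2 (\<lambda>x X. x \<in> X) xs Xs}"

section \<open>H5 = R5 B3 / (quintic relations), as F modulo a two-sided ideal\<close>

definition quintic :: "F \<Rightarrow> F" where
  "quintic s = s ^ 5 - (scal pa * s ^ 4 + scal pb * s ^ 3 + scal pc * s ^ 2 + scal pd * s + scal pe)"

definition rels :: "F set" where
  "rels = {s1 * s1i - 1, s1i * s1 - 1, s2 * s2i - 1, s2i * s2 - 1,
           s1 * s2 * s1 - s2 * s1 * s2, quintic s1, quintic s2}"

text \<open>The two-sided ideal generated by the relations; F / Irel is H5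
  (the first five relations present the group algebra R5 B3).\<close>
definition Irel :: "F set" where
  "Irel = rspan {x * r * y | x r y. r \<in> rels}"

text \<open>An R5-submodule of H5 is represented by its full preimage in F:
  the image of X in H5 has preimage X + Irel.\<close>
definition preim :: "F set \<Rightarrow> F set" where
  "preim X = msum2 X Irel"

fun swapl :: "letter \<Rightarrow> letter" where
  "swapl S1 = S1i" | "swapl S1i = S1" | "swapl S2 = S2i" | "swapl S2i = S2"

fun PhiW :: "fw \<Rightarrow> F" where
  "PhiW (FW ws) = prod_list (map (\<lambda>l. gen (swapl l)) ws)"

definition PhiF :: "F \<Rightarrow> F" where
  "PhiF x = (\<Sum>w\<in>Poly_Mapping.keys x. scal (phiR (Poly_Mapping.lookup x w)) * PhiW w)"

definition Phi_stable :: "F set \<Rightarrow> bool" where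
  "Phi_stable X \<longleftrightarrow> PhiF ` preim X \<subseteq> preim X"

section \<open>The submodules U', U'', U''', U'''', U\<close>

definition u1 :: "F set" where "u1 = rspan (range (\<lambda>k::nat. s1 ^ k))"
definition u2 :: "F set" where "u2 = rspan (range (\<lambda>k::nat. s2 ^ k))"

definition omega :: F where "omega = s2 * s1 ^ 2 * s2"
definition omega_inv :: F where "omega_inv = s2i * s1i ^ 2 * s2i"

definition mid :: "F \<Rightarrow> F set" where "mid w = mprod [u1, {w}, u1]"

definition U1_list :: "F set list" where
  "U1_list =
    [ mprod [u1, u2, u1],
      mprod [u1, {omega}],
      mprod [u1, {omega_inv}],
      mid (s2i * s1 ^ 2 * s2i),
      mid (s2 * s1i ^ 2 * s2),
      mid (s2 ^ 2 * s1 ^ 2 * s2 ^ 2),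
      mid (s2i ^ 2 * s1i ^ 2 * s2i ^ 2),
      mid (s2 * s1i ^ 2 * s2 ^ 2),
      mid (s2i * s1 ^ 2 * s2i ^ 2),
      mid (s2i * s1 * s2i),
      mid (s2 * s1i * s2),
      mid (s2i ^ 2 * s1i ^ 2 * s2 ^ 2),
      mid (s2 ^ 2 * s1 ^ 2 * s2i ^ 2),
      mid (s2 ^ 2 * s1i ^ 2 * s2 ^ 2),
      mid (s2i ^ 2 * s1 ^ 2 * s2i ^ 2),
      mid (s2i ^ 2 * s1 * s2i),
      mid (s2i * s1 * s2i ^ 2) ]"

definition U2_list :: "F set list" where
  "U2_list = U1_list @
    [ mprod [u1, {omega ^ 2}],
      mprod [u1, {omega_inv ^ 2}],
      mid (s2i ^ 2 * s1 ^ 2 * s2i * s1 * s2i),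
      mid (s2 ^ 2 * s1i ^ 2 * s2 * s1i * s2),
      mid (s2 * s1i ^ 2 * s2 ^ 2 * s1i ^ 2 * s2 ^ 2),
      mid (s2i * s1 ^ 2 * s2i ^ 2 * s1 ^ 2 * s2i ^ 2) ]"

definition U3_list :: "F set list" where
  "U3_list = U2_list @ [mprod [u1, {omega ^ 3}], mprod [u1, {omega_inv ^ 3}]]"

definition U4_list :: "F set list" where
  "U4_list = U3_list @ [mprod [u1, {omega ^ 4}], mprod [u1, {omega_inv ^ 4}]]"

definition U5_list :: "F set list" where
  "U5_list = U4_list @ [mprod [u1, {omega ^ 5}], mprod [u1, {omega_inv ^ 5}]]"

definition U1 :: "F set" where "U1 = msum U1_list"
definition U2 :: "F set" where "U2 = msum U2_list"
definition U3 :: "F set" where "U3 = msum U3_list"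
definition U4 :: "F set" where "U4 = msum U4_list"
definition U5 :: "F set" where "U5 = msum U5_list"

end

theory Submission
  imports Defs
begin

text \<open>
  \<open>\<Phi>\<close> is induced by a ring endomorphism \<open>PhiF\<close> of the free algebra that maps every
  defining relation of \<open>H\<^sub>5\<close> back into the relation ideal, so it descends to \<open>H\<^sub>5\<close>.
  Because \<open>e\<close> is invertible, the quintic relation expresses \<open>s\<^sub>i\<^sup>-\<^sup>1\<close> as a polynomial
  in \<open>s\<^sub>i\<close>; hence \<open>\<Phi>(u\<^sub>i) \<subseteq> u\<^sub>i\<close> and \<open>\<Phi>(u\<^sub>1 h u\<^sub>1) \<subseteq> u\<^sub>1 \<Phi>(h) u\<^sub>1\<close>.
  The words \<open>h\<close> defining \<open>U'\<close>, \<open>U''\<close>, \<dots> are permuted by \<open>\<Phi>\<close>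
  (e.g. \<open>\<omega>\<^sup>k \<leftrightarrow> \<omega>\<^sup>-\<^sup>k\<close>), with two exceptions:
  \<open>s\<^sub>2\<^sup>-\<^sup>2 s\<^sub>1 s\<^sub>2\<^sup>-\<^sup>1 \<mapsto> s\<^sub>2\<^sup>2 s\<^sub>1\<^sup>-\<^sup>1 s\<^sub>2\<close> and \<open>s\<^sub>2\<^sup>-\<^sup>1 s\<^sub>1 s\<^sub>2\<^sup>-\<^sup>2 \<mapsto> s\<^sub>2 s\<^sub>1\<^sup>-\<^sup>1 s\<^sub>2\<^sup>2\<close>.
  For these the braid relation gives \<open>s\<^sub>2\<^sup>2 s\<^sub>1\<^sup>-\<^sup>1 s\<^sub>2 = s\<^sub>2\<^sup>3 s\<^sub>1 s\<^sub>2\<^sup>-\<^sup>1 s\<^sub>1\<^sup>-\<^sup>1\<close>, and the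
  quintic relation rewrites \<open>s\<^sub>2\<^sup>3\<close> as a combination of \<open>s\<^sub>2\<^sup>2, s\<^sub>2, 1, s\<^sub>2\<^sup>-\<^sup>1, s\<^sub>2\<^sup>-\<^sup>2\<close>;
  every resulting term already lies in \<open>U'\<close>.
\<close>

section \<open>Ring endomorphisms of the coefficients and of the free algebra\<close>

lemma poly_mapping_single_induct [case_names zero add]:
  assumes "P 0" and "\<And>f a b. P f \<Longrightarrow> P (f + Poly_Mapping.single a b)"
  shows "P x"
proof (induct x rule: Poly_Mapping.update_induct)
  case const then show ?case using assms(1) by simp
next
  case (update f a b)
  have "Poly_Mapping.update a b f = f + Poly_Mapping.single a b"
    using update(1)
    by (intro poly_mapping_eqI) (auto simp: lookup_update lookup_add lookup_single when_def in_keys_iff)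
  then show ?case using assms(2) update(3) by simp
qed

lemma poly_mapping_mult_hom:
  fixes f :: "('a::monoid_add \<Rightarrow>\<^sub>0 'b::semiring_0) \<Rightarrow> 'c::semiring_0"
  assumes f_add: "\<And>x y. f (x + y) = f x + f y" and f_0: "f 0 = 0"
    and f_single: "\<And>a b c d. f (Poly_Mapping.single a b * Poly_Mapping.single c d)
                             = f (Poly_Mapping.single a b) * f (Poly_Mapping.single c d)"
  shows "f (x * y) = f x * f y"
proof (induct x rule: poly_mapping_single_induct)
  case zero then show ?case by (simp add: f_0)
next
  case (add g a b)
  have "f (Poly_Mapping.single a b * y) = f (Poly_Mapping.single a b) * f y"
  proof (induct y rule: poly_mapping_single_induct)
    case zero then show ?case by (simp add: f_0)
  next
    case (add h c d)
    then show ?case by (simp only: distrib_left f_add f_single)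
  qed
  with add show ?case by (simp only: distrib_right f_add)
qed

lemma sum_keys_extend:
  assumes "finite S" and "Poly_Mapping.keys p \<subseteq> S" and "\<And>k. g k 0 = 0"
  shows "(\<Sum>k\<in>Poly_Mapping.keys p. g k (Poly_Mapping.lookup p k))
       = (\<Sum>k\<in>S. g k (Poly_Mapping.lookup p k))"
  using assms by (intro sum.mono_neutral_left) (auto simp: in_keys_iff)

lemma sum_keys_add:
  assumes zero: "\<And>k. g k 0 = 0" and add: "\<And>k a b. g k (a + b) = g k a + g k b"
  shows "(\<Sum>k\<in>Poly_Mapping.keys (p + q). g k (Poly_Mapping.lookup (p + q) k))
       = (\<Sum>k\<in>Poly_Mapping.keys p. g k (Poly_Mapping.lookup p k))
       + (\<Sum>k\<in>Poly_Mapping.keys q. g k (Poly_Mapping.lookup q k))"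
proof -
  let ?S = "Poly_Mapping.keys p \<union> Poly_Mapping.keys q"
  have S: "finite ?S" "Poly_Mapping.keys (p + q) \<subseteq> ?S"
    using keys_add [of p q] by auto
  have "(\<Sum>k\<in>Poly_Mapping.keys (p + q). g k (Poly_Mapping.lookup (p + q) k))
      = (\<Sum>k\<in>?S. g k (Poly_Mapping.lookup p k)) + (\<Sum>k\<in>?S. g k (Poly_Mapping.lookup q k))"
    unfolding sum_keys_extend [where g = g, OF S zero] by (simp add: lookup_add add sum.distrib)
  also have "\<dots> = (\<Sum>k\<in>Poly_Mapping.keys p. g k (Poly_Mapping.lookup p k))
                + (\<Sum>k\<in>Poly_Mapping.keys q. g k (Poly_Mapping.lookup q k))"
    by (simp add: sum_keys_extend [where g = g, OF S(1) _ zero])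
  finally show ?thesis .
qed

lemma sum_keys_single:
  assumes "\<And>k. g k 0 = 0"
  shows "(\<Sum>k\<in>Poly_Mapping.keys (Poly_Mapping.single m c).
           g k (Poly_Mapping.lookup (Poly_Mapping.single m c) k)) = g m c"
  using assms by (subst sum_keys_extend [of "{m}"]) (auto simp: lookup_single)

lemma scal_mult: "scal (r * s) = scal r * scal s"
  by (simp add: scal_def mult_single)

lemma scal_add: "scal (r + s) = scal r + scal s"
  by (simp add: scal_def single_add)

lemma scal_1 [simp]: "scal 1 = 1"
  by (simp add: scal_def)

lemma scal_0 [simp]: "scal 0 = 0"
  by (simp add: scal_def)

lemma scal_uminus: "scal (- r) = - scal r"
  by (simp add: scal_def single_uminus)

lemma scal_commute: "scal r * x = x * scal r"
proof (induct x rule: poly_mapping_single_induct)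
  case zero then show ?case by simp
next
  case (add f a b)
  have "scal r * Poly_Mapping.single a b = Poly_Mapping.single a b * scal r"
    unfolding scal_def mult_single by (simp only: add_0_left add_0_right mult.commute)
  then show ?case using add by (simp only: distrib_left distrib_right)
qed

lemma scal_left_commute: "x * (scal r * y) = scal r * (x * y)"
proof -
  have "x * (scal r * y) = (x * scal r) * y" by (rule mult.assoc [symmetric])
  also have "\<dots> = scal r * (x * y)" by (simp only: scal_commute [of r x, symmetric] mult.assoc)
  finally show ?thesis .
qed

lemma phiR_add: "phiR (p + q) = phiR p + phiR q"
  unfolding phiR_def by (rule sum_keys_add) (simp_all add: distrib_right)

lemma phiR_0 [simp]: "phiR 0 = 0"
  by (simp add: phiR_def)

lemma phiR_single: "phiR (Poly_Mapping.single m c) = of_int c * phi_mono m"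
  unfolding phiR_def by (rule sum_keys_single) simp

lemma phi_mono_add: "phi_mono (m + n) = phi_mono m * phi_mono n"
proof -
  obtain i j k l x where m: "m = (i, j, k, l, x)" by (cases m) auto
  obtain i' j' k' l' x' where n: "n = (i', j', k', l', x')" by (cases n) auto
  have e_power: "Poly_Mapping.single (0, 0, 0, 0, - (x + x')) 1
      = (Poly_Mapping.single (0, 0, 0, 0, - x) 1 * Poly_Mapping.single (0, 0, 0, 0, - x') 1 :: R5)"
    by (simp add: mult_single)
  have sum: "(i, j, k, l, x) + (i', j', k', l', x') = (i + i', j + j', k + k', l + l', x + x')"
    by simp
  show ?thesis
    unfolding m n sum phi_mono_def prod.case e_power by (simp only: power_add mult_ac)
qed

lemma phiR_mult: "phiR (p * q) = phiR p * phiR q"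
  by (rule poly_mapping_mult_hom [OF phiR_add phiR_0])
     (simp only: mult_single phiR_single phi_mono_add of_int_mult mult_ac)

lemma single_zero_exponent [simp]: "Poly_Mapping.single (0, 0, 0, 0, 0) 1 = (1 :: R5)"
  by (simp add: zero_prod_def [symmetric])

lemma phiR_1 [simp]: "phiR 1 = 1"
proof -
  have "phi_mono 0 = 1" by (simp add: phi_mono_def zero_prod_def)
  then show ?thesis by (metis single_one phiR_single of_int_1 mult_1)
qed

lemma pe_inv_mult_pe: "pe_inv * pe = 1"
  by (simp add: pe_inv_def pe_def mult_single)

lemmas phiR_generator_simps =
  phiR_single phi_mono_def prod.case power_one_right power_0 mult_1_right mult_1_left
  minus_zero single_zero_exponent of_int_1

lemma phiR_pa: "phiR pa = - pe_inv * pd"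
  unfolding pa_def by (simp only: phiR_generator_simps)

lemma phiR_pb: "phiR pb = - pe_inv * pc"
  unfolding pb_def by (simp only: phiR_generator_simps)

lemma phiR_pc: "phiR pc = - pe_inv * pb"
  unfolding pc_def by (simp only: phiR_generator_simps)

lemma phiR_pd: "phiR pd = - pe_inv * pa"
  unfolding pd_def by (simp only: phiR_generator_simps)

lemma phiR_pe: "phiR pe = pe_inv"
  unfolding pe_def pe_inv_def by (simp only: phiR_generator_simps)

lemma PhiF_add: "PhiF (x + y) = PhiF x + PhiF y"
  unfolding PhiF_def by (rule sum_keys_add) (simp_all add: phiR_add scal_add distrib_right)

lemma PhiF_0 [simp]: "PhiF 0 = 0"
  by (simp add: PhiF_def)

lemma PhiF_single: "PhiF (Poly_Mapping.single w r) = scal (phiR r) * PhiW w"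
  unfolding PhiF_def by (rule sum_keys_single) simp

lemma PhiW_plus: "PhiW (w + v) = PhiW w * PhiW v"
  by (cases w; cases v) simp

lemma PhiF_mult: "PhiF (x * y) = PhiF x * PhiF y"
proof (rule poly_mapping_mult_hom [OF PhiF_add PhiF_0])
  fix a b c d
  have "scal (phiR b) * scal (phiR d) * (PhiW a * PhiW c)
      = scal (phiR b) * PhiW a * (scal (phiR d) * PhiW c)"
    by (simp only: mult.assoc scal_left_commute [of "PhiW a" "phiR d"])
  then show "PhiF (Poly_Mapping.single a b * Poly_Mapping.single c d)
      = PhiF (Poly_Mapping.single a b) * PhiF (Poly_Mapping.single c d)"
    unfolding mult_single PhiF_single phiR_mult scal_mult PhiW_plus .
qed

lemma PhiF_scal: "PhiF (scal r) = scal (phiR r)"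
  by (simp add: scal_def PhiF_single zero_fw_def)

lemma PhiF_1 [simp]: "PhiF 1 = 1"
  using PhiF_scal [of 1] by simp

lemma PhiF_uminus: "PhiF (- x) = - PhiF x"
proof -
  have "PhiF x + PhiF (- x) = 0"
    by (simp only: PhiF_add [symmetric] add.right_inverse PhiF_0)
  then show ?thesis by (rule minus_unique [symmetric])
qed

lemma PhiF_diff: "PhiF (x - y) = PhiF x - PhiF y"
  by (simp only: diff_conv_add_uminus PhiF_add PhiF_uminus)

lemma PhiF_power: "PhiF (x ^ n) = PhiF x ^ n"
  by (induct n) (simp_all add: PhiF_mult)

lemma PhiF_gen: "PhiF (gen l) = gen (swapl l)"
  by (simp add: gen_def PhiF_single)

lemma PhiF_s1 [simp]: "PhiF s1 = s1i"
  and PhiF_s1i [simp]: "PhiF s1i = s1"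
  and PhiF_s2 [simp]: "PhiF s2 = s2i"
  and PhiF_s2i [simp]: "PhiF s2i = s2"
  by (simp_all add: s1_def s1i_def s2_def s2i_def PhiF_gen)

lemma PhiF_omega: "PhiF omega = omega_inv"
  and PhiF_omega_inv: "PhiF omega_inv = omega"
  by (simp_all add: omega_def omega_inv_def PhiF_mult PhiF_power)

definition is_submodule :: "F set \<Rightarrow> bool" where
  "is_submodule W \<longleftrightarrow>
     0 \<in> W \<and> (\<forall>x\<in>W. \<forall>y\<in>W. x + y \<in> W) \<and> (\<forall>r. \<forall>x\<in>W. scal r * x \<in> W)"

lemma submoduleD:
  assumes "is_submodule W"
  shows submodule_zero: "0 \<in> W"
    and submodule_add: "x \<in> W \<Longrightarrow> y \<in> W \<Longrightarrow> x + y \<in> W"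
    and submodule_scal: "x \<in> W \<Longrightarrow> scal r * x \<in> W"
  using assms unfolding is_submodule_def by auto

lemma submodule_uminus:
  assumes "is_submodule W" and "x \<in> W"
  shows "- x \<in> W"
  using submodule_scal [OF assms, of "- 1"] by (simp add: scal_uminus)

lemma submodule_diff: "is_submodule W \<Longrightarrow> x \<in> W \<Longrightarrow> y \<in> W \<Longrightarrow> x - y \<in> W"
  using submodule_add [of W x "- y"] submodule_uminus [of W y] by simp

lemma rspan_induct [consumes 1, case_names zero add scal_base]:
  assumes x: "x \<in> rspan S"
    and zero: "Q 0"
    and add: "\<And>a b. Q a \<Longrightarrow> Q b \<Longrightarrow> Q (a + b)"
    and scal_base: "\<And>r t. t \<in> S \<Longrightarrow> Q (scal r * t)"
  shows "Q x"
proof -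
  obtain T f where T: "finite T" "T \<subseteq> S" and x_eq: "x = (\<Sum>t\<in>T. scal (f t) * t)"
    using x unfolding rspan_def by blast
  have "T \<subseteq> S \<Longrightarrow> Q (\<Sum>t\<in>T. scal (f t) * t)"
    using T(1) by (induct T rule: finite_induct) (auto intro: zero add scal_base)
  then show ?thesis using T x_eq by simp
qed

lemma rspan_base: "t \<in> S \<Longrightarrow> t \<in> rspan S"
  unfolding rspan_def by (intro CollectI exI [of _ "{t}"] exI [of _ "\<lambda>_. 1"]) simp

lemma rspan_zero: "0 \<in> rspan S"
  unfolding rspan_def by (intro CollectI exI [of _ "{}"]) simp

lemma rspan_add:
  assumes "x \<in> rspan S" and "y \<in> rspan S"
  shows "x + y \<in> rspan S"
proof -
  obtain T1 f1 where T1: "finite T1" "T1 \<subseteq> S" and x: "x = (\<Sum>t\<in>T1. scal (f1 t) * t)"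
    using assms(1) unfolding rspan_def by blast
  obtain T2 f2 where T2: "finite T2" "T2 \<subseteq> S" and y: "y = (\<Sum>t\<in>T2. scal (f2 t) * t)"
    using assms(2) unfolding rspan_def by blast
  define g where "g t = (if t \<in> T1 then f1 t else 0) + (if t \<in> T2 then f2 t else 0)" for t
  have term_eq: "scal (g t) * t = (if t \<in> T1 then scal (f1 t) * t else 0)
                                + (if t \<in> T2 then scal (f2 t) * t else 0)" for t
    by (simp add: g_def scal_add distrib_right)
  have "(\<Sum>t\<in>T1 \<union> T2. scal (g t) * t)
      = (\<Sum>t\<in>(T1 \<union> T2) \<inter> T1. scal (f1 t) * t) + (\<Sum>t\<in>(T1 \<union> T2) \<inter> T2. scal (f2 t) * t)"
    using T1(1) T2(1) by (simp only: term_eq sum.distrib sum.inter_restrict [symmetric] finite_Un)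
  also have "\<dots> = x + y"
    by (simp add: x y Int_absorb1)
  finally show ?thesis
    using T1 T2 unfolding rspan_def by (intro CollectI exI [of _ "T1 \<union> T2"] exI [of _ g]) auto
qed

lemma rspan_scal:
  assumes "x \<in> rspan S"
  shows "scal r * x \<in> rspan S"
proof -
  obtain T f where T: "finite T" "T \<subseteq> S" and x: "x = (\<Sum>t\<in>T. scal (f t) * t)"
    using assms unfolding rspan_def by blast
  have "scal r * x = (\<Sum>t\<in>T. scal (r * f t) * t)"
    by (simp add: x sum_distrib_left scal_mult mult.assoc)
  then show ?thesis
    using T unfolding rspan_def by (intro CollectI exI [of _ T] exI [of _ "\<lambda>t. r * f t"]) simp
qed

lemma is_submodule_rspan: "is_submodule (rspan S)"
  unfolding is_submodule_def using rspan_zero rspan_add rspan_scal by blast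

lemma is_submodule_mprod: "is_submodule (mprod Xs)"
  by (simp add: mprod_def is_submodule_rspan)

lemma is_submodule_mid: "is_submodule (mid h)"
  by (simp add: mid_def is_submodule_mprod)

lemma is_submodule_msum2:
  assumes A: "is_submodule A" and B: "is_submodule B"
  shows "is_submodule (msum2 A B)"
  unfolding is_submodule_def
proof (intro conjI ballI allI)
  show "0 \<in> msum2 A B"
    unfolding msum2_def using submodule_zero [OF A] submodule_zero [OF B] by force
next
  fix x y assume "x \<in> msum2 A B" "y \<in> msum2 A B"
  then obtain a b a' b' where "x = a + b" "a \<in> A" "b \<in> B" "y = a' + b'" "a' \<in> A" "b' \<in> B"
    unfolding msum2_def by blast
  then show "x + y \<in> msum2 A B"
    unfolding msum2_def
    by (intro CollectI exI [of _ "a + a'"] exI [of _ "b + b'"] conjI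
          submodule_add [OF A] submodule_add [OF B]) (simp_all add: add_ac)
next
  fix r x assume "x \<in> msum2 A B"
  then obtain a b where "x = a + b" "a \<in> A" "b \<in> B"
    unfolding msum2_def by blast
  then show "scal r * x \<in> msum2 A B"
    unfolding msum2_def
    by (intro CollectI exI [of _ "scal r * a"] exI [of _ "scal r * b"] conjI
          submodule_scal [OF A] submodule_scal [OF B]) (simp_all add: distrib_left)
qed

lemma is_submodule_zero_set: "is_submodule {0}"
  by (simp add: is_submodule_def)

lemma is_submodule_msum: "\<forall>X\<in>set Xs. is_submodule X \<Longrightarrow> is_submodule (msum Xs)"
  by (induct Xs) (simp_all add: msum_def is_submodule_msum2 is_submodule_zero_set)

lemma msum2_memI_left: "x \<in> A \<Longrightarrow> 0 \<in> B \<Longrightarrow> x \<in> msum2 A B"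
  unfolding msum2_def by force

lemma msum2_memI_right: "0 \<in> A \<Longrightarrow> x \<in> B \<Longrightarrow> x \<in> msum2 A B"
  unfolding msum2_def by force

lemma msum_memI:
  "\<forall>X\<in>set Xs. is_submodule X \<Longrightarrow> X \<in> set Xs \<Longrightarrow> x \<in> X \<Longrightarrow> x \<in> msum Xs"
proof (induct Xs)
  case Nil then show ?case by simp
next
  case (Cons Y Ys)
  have "0 \<in> msum Ys" using Cons(2) submodule_zero [OF is_submodule_msum] by simp
  moreover have "0 \<in> Y" using Cons(2) submodule_zero by simp
  ultimately show ?case
    using Cons by (auto simp: msum_def intro: msum2_memI_left msum2_memI_right)
qed

lemma mprod2_memI: "a \<in> A \<Longrightarrow> b \<in> B \<Longrightarrow> a * b \<in> mprod [A, B]"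
  unfolding mprod_def by (rule rspan_base, intro CollectI exI [of _ "[a, b]"]) simp

lemma mprod3_memI: "a \<in> A \<Longrightarrow> b \<in> B \<Longrightarrow> c \<in> C \<Longrightarrow> a * b * c \<in> mprod [A, B, C]"
  unfolding mprod_def
  by (rule rspan_base, intro CollectI exI [of _ "[a, b, c]"]) (simp add: mult.assoc)

lemma mprod2_generatorE:
  assumes "t \<in> {prod_list xs |xs. list_all2 (\<lambda>x X. x \<in> X) xs [A, B]}"
  obtains a b where "a \<in> A" "b \<in> B" "t = a * b"
  using assms by (auto simp: list_all2_Cons2)

lemma mprod3_generatorE:
  assumes "t \<in> {prod_list xs |xs. list_all2 (\<lambda>x X. x \<in> X) xs [A, B, C]}"
  obtains a b c where "a \<in> A" "b \<in> B" "c \<in> C" "t = a * b * c"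
  using assms by (auto simp: list_all2_Cons2 mult.assoc)

section \<open>The relation ideal and congruence in \<open>H\<^sub>5\<close>\<close>

lemma is_submodule_Irel: "is_submodule Irel"
  by (simp add: Irel_def is_submodule_rspan)

lemma Irel_mult_left:
  assumes "x \<in> Irel"
  shows "z * x \<in> Irel"
  using assms [unfolded Irel_def]
proof (induct rule: rspan_induct)
  case zero then show ?case by (simp add: Irel_def rspan_zero)
next
  case (add a b) then show ?case by (simp add: distrib_left Irel_def rspan_add)
next
  case (scal_base r t)
  then obtain p q s where t: "t = p * q * s" and q: "q \<in> rels" by blast
  have "(z * p) * q * s \<in> Irel"
    unfolding Irel_def using q by (intro rspan_base) blast
  then have "scal r * (z * t) \<in> Irel"
    by (intro submodule_scal [OF is_submodule_Irel]) (simp add: t mult.assoc)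
  then show ?case by (simp add: scal_left_commute)
qed

lemma Irel_mult_right:
  assumes "x \<in> Irel"
  shows "x * z \<in> Irel"
  using assms [unfolded Irel_def]
proof (induct rule: rspan_induct)
  case zero then show ?case by (simp add: Irel_def rspan_zero)
next
  case (add a b) then show ?case by (simp add: distrib_right Irel_def rspan_add)
next
  case (scal_base r t)
  then obtain p q s where t: "t = p * q * s" and q: "q \<in> rels" by blast
  have "p * q * (s * z) \<in> Irel"
    unfolding Irel_def using q by (intro rspan_base) blast
  then have "scal r * (t * z) \<in> Irel"
    by (intro submodule_scal [OF is_submodule_Irel]) (simp add: t mult.assoc)
  then show ?case by (simp add: mult.assoc)
qed

lemma rel_in_Irel: "q \<in> rels \<Longrightarrow> q \<in> Irel"
proof -
  assume "q \<in> rels"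
  moreover have "q = 1 * q * 1" by simp
  ultimately show "q \<in> Irel" unfolding Irel_def by (intro rspan_base) blast
qed

definition congH :: "F \<Rightarrow> F \<Rightarrow> bool" (infix "\<approx>" 50) where
  "x \<approx> y \<longleftrightarrow> x - y \<in> Irel"

lemma congH_refl [simp]: "x \<approx> x"
  by (simp add: congH_def submodule_zero [OF is_submodule_Irel])

lemma congH_sym: "x \<approx> y \<Longrightarrow> y \<approx> x"
  unfolding congH_def using submodule_uminus [OF is_submodule_Irel, of "x - y"] by simp

lemma congH_trans [trans]: "x \<approx> y \<Longrightarrow> y \<approx> z \<Longrightarrow> x \<approx> z"
  unfolding congH_def using submodule_add [OF is_submodule_Irel, of "x - y" "y - z"] by simp

lemma congH_add: "x \<approx> y \<Longrightarrow> x' \<approx> y' \<Longrightarrow> x + x' \<approx> y + y'"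
  unfolding congH_def using submodule_add [OF is_submodule_Irel, of "x - y" "x' - y'"]
  by (simp add: algebra_simps)

lemma congH_diff: "x \<approx> y \<Longrightarrow> x' \<approx> y' \<Longrightarrow> x - x' \<approx> y - y'"
  unfolding congH_def using submodule_diff [OF is_submodule_Irel, of "x - y" "x' - y'"]
  by (simp add: algebra_simps)

lemma congH_mult: "x \<approx> y \<Longrightarrow> x' \<approx> y' \<Longrightarrow> x * x' \<approx> y * y'"
proof -
  assume "x \<approx> y" "x' \<approx> y'"
  then have "(x - y) * x' + y * (x' - y') \<in> Irel"
    unfolding congH_def
    by (intro submodule_add [OF is_submodule_Irel] Irel_mult_left Irel_mult_right)
  then show ?thesis unfolding congH_def by (simp add: algebra_simps)
qed

lemma congH_mult_left: "x \<approx> y \<Longrightarrow> z * x \<approx> z * y"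
  by (rule congH_mult [OF congH_refl])

lemma congH_mult_right: "x \<approx> y \<Longrightarrow> x * z \<approx> y * z"
  by (rule congH_mult [OF _ congH_refl])

lemma congH_power: "x \<approx> y \<Longrightarrow> x ^ n \<approx> y ^ n"
  by (induct n) (simp_all add: congH_mult)

lemma congH_cancel_inner: "a * b \<approx> 1 \<Longrightarrow> x * (a * b) * y \<approx> x * y"
  using congH_mult [OF congH_mult_left [of "a * b" 1 x] congH_refl [of y]] by simp

lemma rels_congH:
  shows s1_s1i: "s1 * s1i \<approx> 1"
    and s1i_s1: "s1i * s1 \<approx> 1"
    and s2_s2i: "s2 * s2i \<approx> 1"
    and s2i_s2: "s2i * s2 \<approx> 1"
    and braid: "s1 * s2 * s1 \<approx> s2 * s1 * s2"
    and quintic_s1: "quintic s1 \<approx> 0"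
    and quintic_s2: "quintic s2 \<approx> 0"
  by (simp_all add: congH_def rel_in_Irel rels_def)

lemma power_inverse_cancel:
  assumes "si * s \<approx> 1"
  shows "si ^ n * s ^ n \<approx> 1"
proof (induct n)
  case 0 then show ?case by simp
next
  case (Suc n)
  have "si ^ Suc n * s ^ Suc n = si ^ n * (si * s) * s ^ n"
    by (simp only: power_Suc2 [of si] power_Suc [of s] mult.assoc)
  also have "\<dots> \<approx> si ^ n * s ^ n" by (rule congH_cancel_inner [OF assms])
  also have "\<dots> \<approx> 1" by (rule Suc)
  finally show ?case .
qed

text \<open>The quintic relation with \<open>e\<close> invertible makes \<open>s\<^sup>-\<^sup>1\<close> a polynomial in \<open>s\<close>.\<close>

definition poly_inv :: "F \<Rightarrow> F" where
  "poly_inv s = scal pe_inv * (s ^ 4 - (scal pa * s ^ 3 + scal pb * s ^ 2 + scal pc * s + scal pd))"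

lemma mult_poly_inv:
  assumes "quintic s \<approx> 0"
  shows "s * poly_inv s \<approx> 1"
proof -
  have "s * (s ^ 4 - (scal pa * s ^ 3 + scal pb * s ^ 2 + scal pc * s + scal pd))
      = s ^ 5 - (scal pa * s ^ 4 + scal pb * s ^ 3 + scal pc * s ^ 2 + scal pd * s)"
    using scal_commute [of pd s]
    by (simp add: right_diff_distrib distrib_left scal_left_commute eval_nat_numeral)
  then have "s * poly_inv s
      = scal pe_inv * (s ^ 5 - (scal pa * s ^ 4 + scal pb * s ^ 3 + scal pc * s ^ 2 + scal pd * s))"
    unfolding poly_inv_def scal_left_commute by simp
  also have "\<dots> = scal pe_inv * (quintic s + scal pe)"
    by (simp add: quintic_def algebra_simps)
  also have "\<dots> \<approx> scal pe_inv * (0 + scal pe)"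
    by (intro congH_mult_left congH_add assms congH_refl)
  also have "\<dots> = 1"
    by (simp add: scal_mult [symmetric] pe_inv_mult_pe)
  finally show ?thesis .
qed

lemma inverse_congH_poly_inv:
  assumes q: "quintic s \<approx> 0" and inv: "si * s \<approx> 1"
  shows "si \<approx> poly_inv s"
proof -
  have "si = si * 1" by simp
  also have "\<dots> \<approx> si * (s * poly_inv s)"
    by (intro congH_mult_left congH_sym [OF mult_poly_inv [OF q]])
  also have "\<dots> = (si * s) * poly_inv s" by (simp add: mult.assoc)
  also have "\<dots> \<approx> 1 * poly_inv s" by (intro congH_mult_right inv)
  finally show ?thesis by simp
qed

lemma s1i_congH_poly_inv: "s1i \<approx> poly_inv s1"
  and s2i_congH_poly_inv: "s2i \<approx> poly_inv s2"
  by (rule inverse_congH_poly_inv [OF quintic_s1 s1i_s1],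
      rule inverse_congH_poly_inv [OF quintic_s2 s2i_s2])

definition cube_reduct :: "F \<Rightarrow> F \<Rightarrow> F" where
  "cube_reduct s si = scal pa * s ^ 2 + scal pb * s + scal pc + scal pd * si + scal pe * si ^ 2"

text \<open>Multiply the quintic relation by \<open>s\<^sup>-\<^sup>2\<close>.\<close>

lemma power3_congH_cube_reduct:
  assumes q: "quintic s \<approx> 0" and inv: "s * si \<approx> 1"
  shows "s ^ 3 \<approx> cube_reduct s si"
proof -
  have inv2: "s ^ 2 * si ^ 2 \<approx> 1"
  proof -
    have "s ^ 2 * si ^ 2 = s * (s * si) * si" by (simp add: power2_eq_square mult.assoc)
    also have "\<dots> \<approx> s * si" by (rule congH_cancel_inner [OF inv])
    finally show ?thesis using inv by (rule congH_trans)
  qed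
  have "s ^ 3 = s ^ 3 * 1" by simp
  also have "\<dots> \<approx> s ^ 3 * (s ^ 2 * si ^ 2)" by (intro congH_mult_left congH_sym [OF inv2])
  also have "\<dots> = s ^ 5 * si ^ 2" by (simp add: mult.assoc [symmetric] power_add [symmetric])
  also have "\<dots> = (quintic s + (scal pa * s ^ 4 + scal pb * s ^ 3 + scal pc * s ^ 2
                    + scal pd * s + scal pe)) * si ^ 2"
    by (simp add: quintic_def)
  also have "\<dots> \<approx> (0 + (scal pa * s ^ 4 + scal pb * s ^ 3 + scal pc * s ^ 2
                    + scal pd * s + scal pe)) * si ^ 2"
    by (intro congH_mult_right congH_add q congH_refl)
  also have "\<dots> = scal pa * (s ^ 2 * (s ^ 2 * si ^ 2)) + scal pb * (s * (s ^ 2 * si ^ 2))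
                + scal pc * (s ^ 2 * si ^ 2) + scal pd * ((s * si) * si) + scal pe * si ^ 2"
    by (simp add: algebra_simps power2_eq_square eval_nat_numeral)
  also have "\<dots> \<approx> scal pa * (s ^ 2 * 1) + scal pb * (s * 1) + scal pc * 1
                + scal pd * (1 * si) + scal pe * si ^ 2"
    by (intro congH_add congH_mult_left congH_mult_right congH_refl inv inv2)
  also have "\<dots> = cube_reduct s si" by (simp add: cube_reduct_def)
  finally show ?thesis .
qed

lemma s2_cube: "s2 ^ 3 \<approx> cube_reduct s2 s2i"
  by (rule power3_congH_cube_reduct [OF quintic_s2 s2_s2i])

lemma s1i_s2_s1: "s1i * s2 * s1 \<approx> s2 * s1 * s2i"
proof -
  have "s1i * s2 * s1 = s1i * s2 * s1 * 1" by simp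
  also have "\<dots> \<approx> s1i * s2 * s1 * (s2 * s2i)" by (intro congH_mult_left congH_sym [OF s2_s2i])
  also have "\<dots> = s1i * (s2 * s1 * s2) * s2i" by (simp add: mult.assoc)
  also have "\<dots> \<approx> s1i * (s1 * s2 * s1) * s2i" by (intro congH_mult congH_refl congH_sym [OF braid])
  also have "\<dots> = 1 * (s1i * s1) * (s2 * s1 * s2i)" by (simp add: mult.assoc)
  also have "\<dots> \<approx> 1 * (s2 * s1 * s2i)" by (rule congH_cancel_inner [OF s1i_s1])
  finally show ?thesis by simp
qed

lemma s2i_s1_s2: "s2i * s1 * s2 \<approx> s1 * s2 * s1i"
proof -
  have "s2i * s1 * s2 = s2i * s1 * s2 * 1" by simp
  also have "\<dots> \<approx> s2i * s1 * s2 * (s1 * s1i)" by (intro congH_mult_left congH_sym [OF s1_s1i])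
  also have "\<dots> = s2i * (s1 * s2 * s1) * s1i" by (simp add: mult.assoc)
  also have "\<dots> \<approx> s2i * (s2 * s1 * s2) * s1i" by (intro congH_mult congH_refl braid)
  also have "\<dots> = 1 * (s2i * s2) * (s1 * s2 * s1i)" by (simp add: mult.assoc)
  also have "\<dots> \<approx> 1 * (s1 * s2 * s1i)" by (rule congH_cancel_inner [OF s2i_s2])
  finally show ?thesis by simp
qed

lemma braid_inverse: "s1i * s2i * s1i \<approx> s2i * s1i * s2i"
proof -
  have right_inverse: "(s2 * s1 * s2) * (s2i * s1i * s2i) \<approx> 1"
  proof -
    have "(s2 * s1 * s2) * (s2i * s1i * s2i) = s2 * s1 * (s2 * s2i) * (s1i * s2i)"
      by (simp add: mult.assoc)
    also have "\<dots> \<approx> s2 * s1 * (s1i * s2i)" by (rule congH_cancel_inner [OF s2_s2i])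
    also have "\<dots> = s2 * (s1 * s1i) * s2i" by (simp add: mult.assoc)
    also have "\<dots> \<approx> s2 * s2i" by (rule congH_cancel_inner [OF s1_s1i])
    also have "\<dots> \<approx> 1" by (rule s2_s2i)
    finally show ?thesis .
  qed
  have "s1i * s2i * s1i = s1i * s2i * s1i * 1" by simp
  also have "\<dots> \<approx> s1i * s2i * s1i * ((s2 * s1 * s2) * (s2i * s1i * s2i))"
    by (rule congH_mult_left [OF congH_sym [OF right_inverse]])
  also have "\<dots> \<approx> s1i * s2i * s1i * ((s1 * s2 * s1) * (s2i * s1i * s2i))"
    by (intro congH_mult_left congH_mult_right congH_sym [OF braid])
  also have "\<dots> = s1i * s2i * (s1i * s1) * (s2 * s1 * s2i * s1i * s2i)" by (simp add: mult.assoc)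
  also have "\<dots> \<approx> s1i * s2i * (s2 * s1 * s2i * s1i * s2i)" by (rule congH_cancel_inner [OF s1i_s1])
  also have "\<dots> = s1i * (s2i * s2) * (s1 * s2i * s1i * s2i)" by (simp add: mult.assoc)
  also have "\<dots> \<approx> s1i * (s1 * s2i * s1i * s2i)" by (rule congH_cancel_inner [OF s2i_s2])
  also have "\<dots> = 1 * (s1i * s1) * (s2i * s1i * s2i)" by (simp add: mult.assoc)
  also have "\<dots> \<approx> 1 * (s2i * s1i * s2i)" by (rule congH_cancel_inner [OF s1i_s1])
  finally show ?thesis by simp
qed

text \<open>\<open>\<Phi>\<close> turns the quintic in \<open>s\<close> into \<open>-e\<^sup>-\<^sup>1\<close> times its reciprocal polynomial in
  \<open>s\<^sup>-\<^sup>1\<close>, and the latter is \<open>s\<^sup>-\<^sup>5\<close> times the quintic.\<close>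

lemma PhiF_quintic:
  assumes Phi_s: "PhiF s = si" and q: "quintic s \<approx> 0" and inv: "si * s \<approx> 1"
  shows "PhiF (quintic s) \<approx> 0"
proof -
  define reciprocal where "reciprocal =
    1 - (scal pa * si + scal pb * si ^ 2 + scal pc * si ^ 3 + scal pd * si ^ 4 + scal pe * si ^ 5)"
  have cancel: "si ^ (m + k) * s ^ k \<approx> si ^ m" for m k
  proof -
    have "si ^ (m + k) * s ^ k = si ^ m * (si ^ k * s ^ k) * 1" by (simp add: power_add mult.assoc)
    also have "\<dots> \<approx> si ^ m * 1" by (rule congH_cancel_inner [OF power_inverse_cancel [OF inv]])
    finally show ?thesis by simp
  qed
  have "si ^ 5 * quintic s = si ^ 5 * s ^ 5 - (scal pa * (si ^ 5 * s ^ 4) + scal pb * (si ^ 5 * s ^ 3)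
          + scal pc * (si ^ 5 * s ^ 2) + scal pd * (si ^ 5 * s) + si ^ 5 * scal pe)"
    unfolding quintic_def right_diff_distrib distrib_left by (simp only: scal_left_commute)
  also have "si ^ 5 * scal pe = scal pe * si ^ 5" by (rule scal_commute [symmetric])
  also have "si ^ 5 * s ^ 5 - (scal pa * (si ^ 5 * s ^ 4) + scal pb * (si ^ 5 * s ^ 3)
          + scal pc * (si ^ 5 * s ^ 2) + scal pd * (si ^ 5 * s) + scal pe * si ^ 5) \<approx> reciprocal"
    unfolding reciprocal_def
    using cancel [of 0 5] cancel [of 1 4] cancel [of 2 3] cancel [of 3 2] cancel [of 4 1]
    by (intro congH_diff congH_add congH_mult_left congH_refl) simp_all
  finally have "reciprocal \<approx> si ^ 5 * quintic s" by (rule congH_sym)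
  also have "\<dots> \<approx> si ^ 5 * 0" by (rule congH_mult_left [OF q])
  finally have reciprocal_0: "reciprocal \<approx> 0" by simp
  have e_cancel: "scal pe_inv * (scal pe * y) = y" for y
    by (simp add: mult.assoc [symmetric] scal_mult [symmetric] pe_inv_mult_pe)
  have "PhiF (quintic s) = si ^ 5 - (scal (- pe_inv * pd) * si ^ 4 + scal (- pe_inv * pc) * si ^ 3
          + scal (- pe_inv * pb) * si ^ 2 + scal (- pe_inv * pa) * si + scal pe_inv)"
    by (simp add: quintic_def PhiF_diff PhiF_add PhiF_mult PhiF_scal PhiF_power Phi_s
        phiR_pa phiR_pb phiR_pc phiR_pd phiR_pe)
  also have "\<dots> = - scal pe_inv * reciprocal"
    unfolding reciprocal_def scal_mult scal_uminus by (simp add: algebra_simps e_cancel)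
  also have "\<dots> \<approx> - scal pe_inv * 0" by (rule congH_mult_left [OF reciprocal_0])
  finally show ?thesis by simp
qed

lemma PhiF_rels: "q \<in> rels \<Longrightarrow> PhiF q \<in> Irel"
  using braid_inverse PhiF_quintic [OF PhiF_s1 quintic_s1 s1i_s1]
    PhiF_quintic [OF PhiF_s2 quintic_s2 s2i_s2]
  unfolding rels_def
  by (auto simp: PhiF_diff PhiF_mult congH_def rel_in_Irel rels_def)

lemma PhiF_Irel:
  assumes "x \<in> Irel"
  shows "PhiF x \<in> Irel"
  using assms [unfolded Irel_def]
proof (induct rule: rspan_induct)
  case zero then show ?case by (simp add: Irel_def rspan_zero)
next
  case (add a b) then show ?case by (simp add: PhiF_add Irel_def rspan_add)
next
  case (scal_base r t)
  then obtain p q z where t: "t = p * q * z" and q: "q \<in> rels" by blast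
  have "scal (phiR r) * (PhiF p * PhiF q * PhiF z) \<in> Irel"
    by (intro submodule_scal [OF is_submodule_Irel] Irel_mult_left Irel_mult_right PhiF_rels q)
  then show ?case by (simp add: t PhiF_mult PhiF_scal Irel_def)
qed

definition power_span :: "F \<Rightarrow> F set" where
  "power_span s = rspan (range (\<lambda>k::nat. s ^ k))"

lemma u1_eq_power_span: "u1 = power_span s1"
  and u2_eq_power_span: "u2 = power_span s2"
  by (simp_all add: u1_def u2_def power_span_def)

lemma is_submodule_power_span: "is_submodule (power_span s)"
  by (simp add: power_span_def is_submodule_rspan)

lemma power_in_power_span: "s ^ k \<in> power_span s"
  unfolding power_span_def by (rule rspan_base) simp

lemma one_in_power_span: "1 \<in> power_span s"
  and self_in_power_span: "s \<in> power_span s"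
  using power_in_power_span [of s 0] power_in_power_span [of s 1] by simp_all

lemma power_mult_power_span:
  assumes "y \<in> power_span s"
  shows "s ^ i * y \<in> power_span s"
  using assms [unfolded power_span_def]
proof (induct rule: rspan_induct)
  case zero then show ?case by (simp add: submodule_zero [OF is_submodule_power_span])
next
  case (add a b) then show ?case
    by (simp add: distrib_left submodule_add [OF is_submodule_power_span])
next
  case (scal_base r t)
  then obtain j where t: "t = s ^ j" by blast
  show ?case
    using submodule_scal [OF is_submodule_power_span power_in_power_span, of r s "i + j"]
    by (simp add: t scal_left_commute power_add)
qed

lemma mult_power_span:
  assumes "x \<in> power_span s" and "y \<in> power_span s"
  shows "x * y \<in> power_span s"
  using assms(1) [unfolded power_span_def]
proof (induct rule: rspan_induct)
  case zero then show ?case by (simp add: submodule_zero [OF is_submodule_power_span])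
next
  case (add a b) then show ?case
    by (simp add: distrib_right submodule_add [OF is_submodule_power_span])
next
  case (scal_base r t)
  then obtain j where t: "t = s ^ j" by blast
  show ?case
    using submodule_scal [OF is_submodule_power_span power_mult_power_span [OF assms(2)], of r j]
    by (simp add: t mult.assoc)
qed

lemma power_power_span: "x \<in> power_span s \<Longrightarrow> x ^ n \<in> power_span s"
  by (induct n) (simp_all add: one_in_power_span mult_power_span)

lemma poly_inv_in_power_span: "poly_inv s \<in> power_span s"
proof -
  have scal_in: "scal r \<in> power_span s" for r
    using submodule_scal [OF is_submodule_power_span one_in_power_span, of r s] by simp
  show ?thesis
    unfolding poly_inv_def
    by (intro submodule_scal [OF is_submodule_power_span] submodule_diff [OF is_submodule_power_span]
        submodule_add [OF is_submodule_power_span] power_in_power_span self_in_power_span scal_in)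
qed

lemma PhiF_power_span:
  assumes Phi_s: "PhiF s = si" and q: "quintic s \<approx> 0" and inv: "si * s \<approx> 1"
    and x: "x \<in> power_span s"
  obtains x' where "x' \<in> power_span s" and "PhiF x \<approx> x'"
proof -
  have "\<exists>x'\<in>power_span s. PhiF x \<approx> x'"
    using x [unfolded power_span_def]
  proof (induct rule: rspan_induct)
    case zero then show ?case using submodule_zero [OF is_submodule_power_span] by force
  next
    case (add a b)
    then obtain a' b' where "a' \<in> power_span s" "PhiF a \<approx> a'" "b' \<in> power_span s" "PhiF b \<approx> b'"
      by blast
    then show ?case
      by (intro bexI [of _ "a' + b'"])
         (auto simp: PhiF_add intro: congH_add submodule_add [OF is_submodule_power_span])
  next
    case (scal_base r t)
    then obtain j where t: "t = s ^ j" by blast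
    have "PhiF (scal r * t) = scal (phiR r) * si ^ j"
      by (simp add: t PhiF_mult PhiF_scal PhiF_power Phi_s)
    also have "\<dots> \<approx> scal (phiR r) * poly_inv s ^ j"
      by (intro congH_mult_left congH_power inverse_congH_poly_inv q inv)
    finally show ?case
      by (intro bexI [of _ "scal (phiR r) * poly_inv s ^ j"] submodule_scal [OF is_submodule_power_span]
          power_power_span poly_inv_in_power_span)
  qed
  then show ?thesis using that by blast
qed

lemma PhiF_u1:
  assumes "x \<in> u1"
  obtains x' where "x' \<in> u1" and "PhiF x \<approx> x'"
  using PhiF_power_span [OF PhiF_s1 quintic_s1 s1i_s1] assms unfolding u1_eq_power_span by blast

lemma PhiF_u2:
  assumes "x \<in> u2"
  obtains x' where "x' \<in> u2" and "PhiF x \<approx> x'"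
  using PhiF_power_span [OF PhiF_s2 quintic_s2 s2i_s2] assms unfolding u2_eq_power_span by blast

lemma u1_mult: "x \<in> u1 \<Longrightarrow> y \<in> u1 \<Longrightarrow> x * y \<in> u1"
  unfolding u1_eq_power_span by (rule mult_power_span)

lemma s1_in_u1: "s1 \<in> u1"
  and poly_inv_s1_in_u1: "poly_inv s1 \<in> u1"
  and s2_in_u2: "s2 \<in> u2"
  and poly_inv_s2_in_u2: "poly_inv s2 \<in> u2"
  unfolding u1_eq_power_span u2_eq_power_span
  by (simp_all add: self_in_power_span poly_inv_in_power_span)

definition saturated :: "F set \<Rightarrow> bool" where
  "saturated W \<longleftrightarrow> is_submodule W \<and> Irel \<subseteq> W"

lemma saturated_submodule: "saturated W \<Longrightarrow> is_submodule W"
  by (simp add: saturated_def)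

lemma saturated_congH:
  assumes W: "saturated W" and "x \<approx> y" and "y \<in> W"
  shows "x \<in> W"
proof -
  have "(x - y) + y \<in> W"
    using assms by (intro submodule_add [OF saturated_submodule [OF W]]) (auto simp: saturated_def congH_def)
  then show ?thesis by simp
qed

lemma saturated_preim: "is_submodule X \<Longrightarrow> saturated (preim X)"
  unfolding saturated_def preim_def
  by (auto intro: is_submodule_msum2 is_submodule_Irel msum2_memI_right submodule_zero)

lemma preim_memI: "is_submodule X \<Longrightarrow> x \<in> X \<Longrightarrow> x \<in> preim X"
  unfolding preim_def by (rule msum2_memI_left) (simp_all add: submodule_zero [OF is_submodule_Irel])

lemma PhiF_rspan_mem:
  assumes W: "is_submodule W" and x: "x \<in> rspan S" and base: "\<And>t. t \<in> S \<Longrightarrow> PhiF t \<in> W"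
  shows "PhiF x \<in> W"
  using x
proof (induct rule: rspan_induct)
  case zero then show ?case by (simp add: submodule_zero [OF W])
next
  case (add a b) then show ?case by (simp add: PhiF_add submodule_add [OF W])
next
  case (scal_base r t)
  then show ?case by (simp add: PhiF_mult PhiF_scal submodule_scal [OF W base])
qed

definition sandwich_closed :: "F set \<Rightarrow> F \<Rightarrow> bool" where
  "sandwich_closed W h \<longleftrightarrow> (\<forall>x\<in>u1. \<forall>y\<in>u1. x * h * y \<in> W)"

lemma sandwich_closedI: "(\<And>x y. x \<in> u1 \<Longrightarrow> y \<in> u1 \<Longrightarrow> x * h * y \<in> W) \<Longrightarrow> sandwich_closed W h"
  by (simp add: sandwich_closed_def)

lemma sandwich_closedD: "sandwich_closed W h \<Longrightarrow> x \<in> u1 \<Longrightarrow> y \<in> u1 \<Longrightarrow> x * h * y \<in> W"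
  by (simp add: sandwich_closed_def)

lemma sandwich_closed_if_mid_subset: "mid h \<subseteq> W \<Longrightarrow> sandwich_closed W h"
  unfolding mid_def by (rule sandwich_closedI) (blast intro: mprod3_memI)

lemma sandwich_closed_if_u1u2u1_subset: "mprod [u1, u2, u1] \<subseteq> W \<Longrightarrow> y \<in> u2 \<Longrightarrow> sandwich_closed W y"
  by (rule sandwich_closedI) (blast intro: mprod3_memI)

lemma sandwich_closed_congH:
  assumes W: "saturated W" and "h \<approx> h'" and h': "sandwich_closed W h'"
  shows "sandwich_closed W h"
proof (rule sandwich_closedI)
  fix x y assume "x \<in> u1" "y \<in> u1"
  moreover have "x * h * y \<approx> x * h' * y" by (intro congH_mult congH_refl \<open>h \<approx> h'\<close>)
  ultimately show "x * h * y \<in> W" by (blast intro: saturated_congH [OF W] sandwich_closedD [OF h'])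
qed

lemma sandwich_closed_add:
  assumes W: "is_submodule W" and "sandwich_closed W a" and "sandwich_closed W b"
  shows "sandwich_closed W (a + b)"
  using assms by (intro sandwich_closedI) (simp add: distrib_left distrib_right submodule_add sandwich_closedD)

lemma sandwich_closed_scal:
  assumes W: "is_submodule W" and a: "sandwich_closed W a"
  shows "sandwich_closed W (scal r * a)"
proof (rule sandwich_closedI)
  fix x y assume "x \<in> u1" "y \<in> u1"
  then have "scal r * (x * a * y) \<in> W" by (intro submodule_scal [OF W] sandwich_closedD [OF a])
  then show "x * (scal r * a) * y \<in> W" by (simp only: scal_left_commute mult.assoc)
qed

lemma sandwich_closed_mult_left:
  assumes "q \<in> u1" and h: "sandwich_closed W h"
  shows "sandwich_closed W (q * h)"
  using sandwich_closedD [OF h u1_mult [OF _ assms(1)]] by (intro sandwich_closedI) (simp add: mult.assoc)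

lemma sandwich_closed_mult_right:
  assumes "q \<in> u1" and h: "sandwich_closed W h"
  shows "sandwich_closed W (h * q)"
  using sandwich_closedD [OF h _ u1_mult [OF assms(1)]] by (intro sandwich_closedI) (simp add: mult.assoc)

lemma sandwich_closed_s1i_left: "saturated W \<Longrightarrow> sandwich_closed W h \<Longrightarrow> sandwich_closed W (s1i * h)"
  by (rule sandwich_closed_congH [OF _ congH_mult_right [OF s1i_congH_poly_inv]])
     (auto intro: sandwich_closed_mult_left [OF poly_inv_s1_in_u1])

lemma sandwich_closed_s1i_right: "saturated W \<Longrightarrow> sandwich_closed W h \<Longrightarrow> sandwich_closed W (h * s1i)"
  by (rule sandwich_closed_congH [OF _ congH_mult_left [OF s1i_congH_poly_inv]])
     (auto intro: sandwich_closed_mult_right [OF poly_inv_s1_in_u1])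

lemma PhiF_mid_mem:
  assumes W: "saturated W" and h: "sandwich_closed W (PhiF h)" and x: "x \<in> mid h"
  shows "PhiF x \<in> W"
  using saturated_submodule [OF W] x [unfolded mid_def mprod_def]
proof (rule PhiF_rspan_mem)
  fix t assume "t \<in> {prod_list xs |xs. list_all2 (\<lambda>x X. x \<in> X) xs [u1, {h}, u1]}"
  then obtain a b c where a: "a \<in> u1" and "b \<in> {h}" and c: "c \<in> u1" and "t = a * b * c"
    by (rule mprod3_generatorE)
  then have t: "t = a * h * c" by simp
  obtain a' where "a' \<in> u1" "PhiF a \<approx> a'" using PhiF_u1 [OF a] .
  moreover obtain c' where "c' \<in> u1" "PhiF c \<approx> c'" using PhiF_u1 [OF c] .
  ultimately show "PhiF t \<in> W"
    unfolding t PhiF_mult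
    by (blast intro: saturated_congH [OF W] congH_mult congH_refl sandwich_closedD [OF h])
qed

lemma PhiF_u1_times_mem:
  assumes W: "saturated W" and h: "\<And>y. y \<in> u1 \<Longrightarrow> y * PhiF h \<in> W" and x: "x \<in> mprod [u1, {h}]"
  shows "PhiF x \<in> W"
  using saturated_submodule [OF W] x [unfolded mprod_def]
proof (rule PhiF_rspan_mem)
  fix t assume "t \<in> {prod_list xs |xs. list_all2 (\<lambda>x X. x \<in> X) xs [u1, {h}]}"
  then obtain a b where a: "a \<in> u1" and "b \<in> {h}" and "t = a * b"
    by (rule mprod2_generatorE)
  then have t: "t = a * h" by simp
  obtain a' where "a' \<in> u1" "PhiF a \<approx> a'" using PhiF_u1 [OF a] .
  then show "PhiF t \<in> W"
    unfolding t PhiF_mult by (blast intro: saturated_congH [OF W] congH_mult_right h)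
qed

lemma PhiF_u1u2u1_mem:
  assumes W: "saturated W" and sub: "mprod [u1, u2, u1] \<subseteq> W" and x: "x \<in> mprod [u1, u2, u1]"
  shows "PhiF x \<in> W"
  using saturated_submodule [OF W] x [unfolded mprod_def]
proof (rule PhiF_rspan_mem)
  fix t assume "t \<in> {prod_list xs |xs. list_all2 (\<lambda>x X. x \<in> X) xs [u1, u2, u1]}"
  then obtain a b c where a: "a \<in> u1" and b: "b \<in> u2" and c: "c \<in> u1" and t: "t = a * b * c"
    by (rule mprod3_generatorE)
  obtain a' where "a' \<in> u1" "PhiF a \<approx> a'" using PhiF_u1 [OF a] .
  moreover obtain b' where "b' \<in> u2" "PhiF b \<approx> b'" using PhiF_u2 [OF b] .
  moreover obtain c' where "c' \<in> u1" "PhiF c \<approx> c'" using PhiF_u1 [OF c] .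
  ultimately show "PhiF t \<in> W"
    unfolding t PhiF_mult
    by (blast intro: saturated_congH [OF W] congH_mult subsetD [OF sub] mprod3_memI)
qed

section \<open>The two generators not permuted by \<open>\<Phi>\<close>\<close>

context
  fixes W :: "F set"
  assumes W: "saturated W"
    and u1u2u1: "mprod [u1, u2, u1] \<subseteq> W"
    and mid_s2_s1i_s2: "mid (s2 * s1i * s2) \<subseteq> W"
    and mid_s2i_s1_s2i: "mid (s2i * s1 * s2i) \<subseteq> W"
    and mid_s2i2_s1_s2i: "mid (s2i ^ 2 * s1 * s2i) \<subseteq> W"
    and mid_s2i_s1_s2i2: "mid (s2i * s1 * s2i ^ 2) \<subseteq> W"
begin

lemma sandwich_closed_s2:  "sandwich_closed W s2"
  and sandwich_closed_s2i: "sandwich_closed W s2i"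
  by (rule sandwich_closed_if_u1u2u1_subset [OF u1u2u1 s2_in_u2],
      rule sandwich_closed_congH [OF W s2i_congH_poly_inv
        sandwich_closed_if_u1u2u1_subset [OF u1u2u1 poly_inv_s2_in_u2]])

lemma sandwich_closed_s2sq_s1i_s2: "sandwich_closed W (s2 ^ 2 * s1i * s2)"
proof -
  have braid_step: "s2 ^ 2 * s1i * s2 \<approx> s2 ^ 3 * s1 * s2i * s1i"
  proof -
    have "s2 ^ 2 * s1i * s2 = s2 ^ 2 * s1i * s2 * 1" by simp
    also have "\<dots> \<approx> s2 ^ 2 * s1i * s2 * (s1 * s1i)" by (intro congH_mult_left congH_sym [OF s1_s1i])
    also have "\<dots> = s2 ^ 2 * (s1i * s2 * s1) * s1i" by (simp add: mult.assoc)
    also have "\<dots> \<approx> s2 ^ 2 * (s2 * s1 * s2i) * s1i" by (intro congH_mult congH_refl s1i_s2_s1)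
    also have "\<dots> = s2 ^ 3 * s1 * s2i * s1i" by (simp add: mult.assoc eval_nat_numeral)
    finally show ?thesis .
  qed
  have cube_step: "s2 ^ 3 * s1 * s2i \<approx> scal pa * (s2 ^ 2 * s1 * s2i) + scal pb * (s2 * s1 * s2i)
      + scal pc * (s1 * s2i) + scal pd * (s2i * s1 * s2i) + scal pe * (s2i ^ 2 * s1 * s2i)"
  proof -
    have "s2 ^ 3 * s1 * s2i \<approx> cube_reduct s2 s2i * s1 * s2i" by (intro congH_mult_right s2_cube)
    also have "\<dots> = scal pa * (s2 ^ 2 * s1 * s2i) + scal pb * (s2 * s1 * s2i) + scal pc * (s1 * s2i)
        + scal pd * (s2i * s1 * s2i) + scal pe * (s2i ^ 2 * s1 * s2i)"
      by (simp add: cube_reduct_def distrib_right mult.assoc)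
    finally show ?thesis .
  qed
  have "sandwich_closed W (s2 ^ 2 * s1 * s2i)"
  proof -
    have "s2 ^ 2 * s1 * s2i = s2 * (s2 * s1 * s2i)" by (simp add: mult.assoc power2_eq_square)
    also have "\<dots> \<approx> s2 * (s1i * s2 * s1)" by (intro congH_mult_left congH_sym [OF s1i_s2_s1])
    also have "\<dots> = (s2 * s1i * s2) * s1" by (simp add: mult.assoc)
    finally show ?thesis
      by (rule sandwich_closed_congH [OF W _ sandwich_closed_mult_right [OF s1_in_u1
            sandwich_closed_if_mid_subset [OF mid_s2_s1i_s2]]])
  qed
  moreover have "sandwich_closed W (s2 * s1 * s2i)"
  proof -
    have "s2 * s1 * s2i \<approx> s1i * (s2 * s1)" using congH_sym [OF s1i_s2_s1] by (simp add: mult.assoc)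
    then show ?thesis
      by (rule sandwich_closed_congH [OF W _ sandwich_closed_s1i_left [OF W
            sandwich_closed_mult_right [OF s1_in_u1 sandwich_closed_s2]]])
  qed
  moreover have "sandwich_closed W (s1 * s2i)"
    by (rule sandwich_closed_mult_left [OF s1_in_u1 sandwich_closed_s2i])
  ultimately have "sandwich_closed W (s2 ^ 3 * s1 * s2i)"
    using saturated_submodule [OF W] sandwich_closed_if_mid_subset [OF mid_s2i_s1_s2i]
      sandwich_closed_if_mid_subset [OF mid_s2i2_s1_s2i]
    by (intro sandwich_closed_congH [OF W cube_step] sandwich_closed_add sandwich_closed_scal)
  then show ?thesis
    by (rule sandwich_closed_congH [OF W braid_step sandwich_closed_s1i_right [OF W]])
qed

lemma sandwich_closed_s2_s1i_s2sq: "sandwich_closed W (s2 * s1i * s2 ^ 2)"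
proof -
  have braid_step: "s2 * s1i * s2 ^ 2 \<approx> s1i * (s2i * s1 * s2 ^ 3)"
  proof -
    have "s2 * s1i * s2 ^ 2 = 1 * (s2 * s1i * s2 ^ 2)" by simp
    also have "\<dots> \<approx> (s1i * s1) * (s2 * s1i * s2 ^ 2)" by (intro congH_mult_right congH_sym [OF s1i_s1])
    also have "\<dots> = s1i * (s1 * s2 * s1i) * s2 ^ 2" by (simp add: mult.assoc)
    also have "\<dots> \<approx> s1i * (s2i * s1 * s2) * s2 ^ 2" by (intro congH_mult congH_refl congH_sym [OF s2i_s1_s2])
    also have "\<dots> = s1i * (s2i * s1 * s2 ^ 3)" by (simp add: mult.assoc eval_nat_numeral)
    finally show ?thesis .
  qed
  have cube_step: "s2i * s1 * s2 ^ 3 \<approx> scal pa * (s2i * s1 * s2 ^ 2) + scal pb * (s2i * s1 * s2)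
      + scal pc * (s2i * s1) + scal pd * (s2i * s1 * s2i) + scal pe * (s2i * s1 * s2i ^ 2)"
  proof -
    have "s2i * s1 * s2 ^ 3 \<approx> s2i * s1 * cube_reduct s2 s2i" by (intro congH_mult_left s2_cube)
    also have "\<dots> = scal pa * (s2i * s1 * s2 ^ 2) + scal pb * (s2i * s1 * s2) + scal pc * (s2i * s1)
        + scal pd * (s2i * s1 * s2i) + scal pe * (s2i * s1 * s2i ^ 2)"
      unfolding cube_reduct_def distrib_left scal_left_commute scal_commute [of pc "s2i * s1", symmetric] ..
    finally show ?thesis .
  qed
  have "sandwich_closed W (s2i * s1 * s2 ^ 2)"
  proof -
    have "s2i * s1 * s2 ^ 2 = (s2i * s1 * s2) * s2" by (simp add: mult.assoc power2_eq_square)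
    also have "\<dots> \<approx> (s1 * s2 * s1i) * s2" by (intro congH_mult_right s2i_s1_s2)
    also have "\<dots> = s1 * (s2 * s1i * s2)" by (simp add: mult.assoc)
    finally show ?thesis
      by (rule sandwich_closed_congH [OF W _ sandwich_closed_mult_left [OF s1_in_u1
            sandwich_closed_if_mid_subset [OF mid_s2_s1i_s2]]])
  qed
  moreover have "sandwich_closed W (s2i * s1 * s2)"
    by (rule sandwich_closed_congH [OF W s2i_s1_s2 sandwich_closed_s1i_right [OF W
          sandwich_closed_mult_left [OF s1_in_u1 sandwich_closed_s2]]])
  moreover have "sandwich_closed W (s2i * s1)"
    by (rule sandwich_closed_mult_right [OF s1_in_u1 sandwich_closed_s2i])
  ultimately have "sandwich_closed W (s2i * s1 * s2 ^ 3)"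
    using saturated_submodule [OF W] sandwich_closed_if_mid_subset [OF mid_s2i_s1_s2i]
      sandwich_closed_if_mid_subset [OF mid_s2i_s1_s2i2]
    by (intro sandwich_closed_congH [OF W cube_step] sandwich_closed_add sandwich_closed_scal)
  then show ?thesis
    by (rule sandwich_closed_congH [OF W braid_step sandwich_closed_s1i_left [OF W]])
qed

end

context
  fixes Xs :: "F set list"
  assumes components: "\<forall>X\<in>set Xs. is_submodule X"
begin

lemma saturated_preim_msum: "saturated (preim (msum Xs))"
  by (rule saturated_preim [OF is_submodule_msum [OF components]])

lemma Phi_stable_msum:
  assumes PhiF_components: "\<forall>X\<in>set Xs. PhiF ` X \<subseteq> preim (msum Xs)"
  shows "Phi_stable (msum Xs)"
proof -
  note W_add = submodule_add [OF saturated_submodule [OF saturated_preim_msum]]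
  have PhiF_msum: "PhiF u \<in> preim (msum Xs)" if "set Ys \<subseteq> set Xs" and "u \<in> msum Ys" for Ys u
    using that
  proof (induct Ys arbitrary: u)
    case Nil then show ?case
      using submodule_zero [OF saturated_submodule [OF saturated_preim_msum]] by (simp add: msum_def)
  next
    case (Cons Y Ys)
    then obtain a b where u: "u = a + b" and a: "a \<in> Y" and b: "b \<in> msum Ys"
      by (auto simp: msum_def msum2_def)
    have "PhiF a \<in> preim (msum Xs)" using Cons.prems(1) PhiF_components a by auto
    moreover have "PhiF b \<in> preim (msum Xs)" using Cons b by simp
    ultimately show ?case by (simp add: u PhiF_add W_add)
  qed
  show ?thesis
    unfolding Phi_stable_def
  proof
    fix y assume "y \<in> PhiF ` preim (msum Xs)"
    then obtain u r where y: "y = PhiF (u + r)" and u: "u \<in> msum Xs" and r: "r \<in> Irel"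
      by (auto simp: preim_def msum2_def)
    have "PhiF u \<in> preim (msum Xs)" by (rule PhiF_msum [OF order_refl u])
    moreover have "PhiF r \<in> preim (msum Xs)"
      using saturated_preim_msum PhiF_Irel [OF r] by (auto simp: saturated_def)
    ultimately show "y \<in> preim (msum Xs)" by (simp add: y PhiF_add W_add)
  qed
qed

lemma component_subset_preim_msum: "X \<in> set Xs \<Longrightarrow> X \<subseteq> preim (msum Xs)"
  using components by (blast intro: preim_memI is_submodule_msum msum_memI)

lemma PhiF_mid_subset_preim_msum:
  "mid (PhiF h) \<in> set Xs \<Longrightarrow> PhiF ` mid h \<subseteq> preim (msum Xs)"
  by (auto intro: PhiF_mid_mem [OF saturated_preim_msum
        sandwich_closed_if_mid_subset [OF component_subset_preim_msum]])

lemma PhiF_u1_times_subset_preim_msum: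
  assumes "mprod [u1, {PhiF h}] \<in> set Xs"
  shows "PhiF ` mprod [u1, {h}] \<subseteq> preim (msum Xs)"
proof (rule image_subsetI)
  fix x assume "x \<in> mprod [u1, {h}]"
  moreover have "y * PhiF h \<in> preim (msum Xs)" if "y \<in> u1" for y
    using component_subset_preim_msum [OF assms] mprod2_memI [OF that singletonI] by blast
  ultimately show "PhiF x \<in> preim (msum Xs)"
    by (rule PhiF_u1_times_mem [OF saturated_preim_msum, rotated])
qed

lemma U1_components_PhiF:
  assumes U1: "set U1_list \<subseteq> set Xs"
  shows "\<forall>X\<in>set U1_list. PhiF ` X \<subseteq> preim (msum Xs)"
proof -
  have subset: "X \<subseteq> preim (msum Xs)" if "X \<in> set U1_list" for X
    using that U1 component_subset_preim_msum by blast
  have "mprod [u1, u2, u1] \<subseteq> preim (msum Xs)"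
    and "mid (s2 * s1i * s2) \<subseteq> preim (msum Xs)"
    and "mid (s2i * s1 * s2i) \<subseteq> preim (msum Xs)"
    and "mid (s2i ^ 2 * s1 * s2i) \<subseteq> preim (msum Xs)"
    and "mid (s2i * s1 * s2i ^ 2) \<subseteq> preim (msum Xs)"
    by (simp_all add: subset U1_list_def)
  note blocks = saturated_preim_msum this
  have "PhiF ` mprod [u1, u2, u1] \<subseteq> preim (msum Xs)"
    using blocks by (blast intro: PhiF_u1u2u1_mem)
  moreover have "PhiF ` mid (s2i ^ 2 * s1 * s2i) \<subseteq> preim (msum Xs)"
    using PhiF_mid_mem [OF saturated_preim_msum, of "s2i ^ 2 * s1 * s2i"]
      sandwich_closed_s2sq_s1i_s2 [OF blocks]
    by (simp add: PhiF_mult PhiF_power image_subset_iff)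
  moreover have "PhiF ` mid (s2i * s1 * s2i ^ 2) \<subseteq> preim (msum Xs)"
    using PhiF_mid_mem [OF saturated_preim_msum, of "s2i * s1 * s2i ^ 2"]
      sandwich_closed_s2_s1i_s2sq [OF blocks]
    by (simp add: PhiF_mult PhiF_power image_subset_iff)
  \<comment> \<open>the simplifier checks that \<open>\<Phi>(h)\<close> is again one of the listed words\<close>
  ultimately show ?thesis
    using U1 unfolding U1_list_def
    by (simp add: PhiF_mid_subset_preim_msum PhiF_u1_times_subset_preim_msum PhiF_mult PhiF_power
        PhiF_omega PhiF_omega_inv)
qed

lemma U_list_components_PhiF:
  assumes Ys: "Ys \<in> {U1_list, U2_list, U3_list, U4_list, U5_list}" and "set Ys \<subseteq> set Xs"
  shows "\<forall>X\<in>set Ys. PhiF ` X \<subseteq> preim (msum Xs)"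
proof -
  have "set U1_list \<subseteq> set Xs"
    using Ys \<open>set Ys \<subseteq> set Xs\<close> by (auto simp: U5_list_def U4_list_def U3_list_def U2_list_def)
  note rules = U1_components_PhiF [OF this] PhiF_mid_subset_preim_msum PhiF_u1_times_subset_preim_msum
    PhiF_mult PhiF_power PhiF_omega PhiF_omega_inv
  from Ys consider "Ys = U1_list" | "Ys = U2_list" | "Ys = U3_list" | "Ys = U4_list" | "Ys = U5_list"
    by blast
  then show ?thesis
  proof cases
    case 1 then show ?thesis using rules(1) by simp
  next
    case 2 then show ?thesis using \<open>set Ys \<subseteq> set Xs\<close> by (simp add: U2_list_def rules)
  next
    case 3 then show ?thesis using \<open>set Ys \<subseteq> set Xs\<close> by (simp add: U3_list_def U2_list_def rules)
  next
    case 4 then show ?thesis using \<open>set Ys \<subseteq> set Xs\<close>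
      by (simp add: U4_list_def U3_list_def U2_list_def rules)
  next
    case 5 then show ?thesis using \<open>set Ys \<subseteq> set Xs\<close>
      by (simp add: U5_list_def U4_list_def U3_list_def U2_list_def rules)
  qed
qed

end

theorem lemma4p1:
  shows "Phi_stable U1 \<and> Phi_stable U2 \<and> Phi_stable U3 \<and> Phi_stable U4 \<and> Phi_stable U5"
proof -
  have "Phi_stable (msum Xs)" if Xs: "Xs \<in> {U1_list, U2_list, U3_list, U4_list, U5_list}" for Xs
  proof -
    have components: "\<forall>X\<in>set Xs. is_submodule X"
      using Xs by (auto simp: U5_list_def U4_list_def U3_list_def U2_list_def U1_list_def
          is_submodule_mprod is_submodule_mid)
    show ?thesis
      by (rule Phi_stable_msum [OF components U_list_components_PhiF [OF components Xs order_refl]])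
  qed
  then show ?thesis by (simp add: U1_def U2_def U3_def U4_def U5_def)
qed

end
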